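(* Let $m\ge1$ and $n\ge1$ be integers. For $0\le s\le m-1$ define $$H_{m,s}(q)=\frac{\prod_{j=0}^{s}(1+q^{2m-2j-1})}{(1+q)^{s}(1-q)^{2s}}\sum_{k=0}^{s}\frac{(-1)^{s-k}}{1+q^{2m-2k-1}}\binom{2m-1}{k}\sum_{i=0}^{s-k}\binom{m-s+i-1}{i}\left[\binom{m-k-i-1}{s-k-i}q^{2s-2k-2i}+\binom{m-k-i-2}{s-k-i-1}q^{2s-2k-2i-1}\right].$$ Then each $H_{m,s}(q)$ is a polynomial in $\mathbb{Z}[q]$, and $$T_{2m-1,n}(q)=(-1)^{m+n}H_{m,m-1}(q^{1/2})\frac{q^{mn-\frac n2}}{(1+q^{1/2})^{m}\prod_{i=0}^{m-1}(1+q^{m-i-\frac12})}+\frac{1-q^{n+\frac12}}{1-q^{1/2}}\sum_{k=0}^{m-1}(-1)^k\frac{H_{m,k}(q^{1/2})(1-q^n)^{m-k-1}(1-q^{n+1})^{m-k-1}q^{kn}}{(1-q)^{2m-2k-2}(1+q^{1/2})^{k+1}\prod_{i=0}^{k}(1+q^{m-i-\frac12})}.$$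
   Context: $q$ is an indeterminate and $q^{1/2}$ a fixed formal square root of $q$; identities are identities of rational functions in $q^{1/2}$. For integers $m,n\ge1$, $$T_{m,n}(q)=\sum_{k=1}^{n}(-1)^{n-k}\left(\frac{1-q^k}{1-q}\right)^{m}q^{\frac m2(n-k)}.$$ Binomial coefficients $\binom{a}{b}$ with integers $a,b$ are taken to be $0$ when $b<0$ or when $0\le a<b$. *)

theory Defs
  imports Complex_Main "HOL-Computational_Algebra.Polynomial"
begin

text \<open>Binomial coefficient with integer arguments: 0 if b < 0, generalized
  binomial (a gchoose b) otherwise (which is 0 when 0 \<le> a < b).\<close>
definition binomZ :: "int \<Rightarrow> int \<Rightarrow> real" where
  "binomZ a b = (if b < 0 then 0 else (real_of_int a) gchoose (nat b))"

text \<open>All functions are written in the variable t standing for q^(1/2).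
  Tsq m n t is T_{m,n}(q) with q = t^2.\<close>
definition Tsq :: "nat \<Rightarrow> nat \<Rightarrow> real \<Rightarrow> real" where
  "Tsq m n t = (\<Sum>k=1..n. (-1) ^ (n - k) * ((1 - (t^2) ^ k) / (1 - t^2)) ^ m
                              * t ^ (m * (n - k)))"

definition H :: "nat \<Rightarrow> nat \<Rightarrow> real \<Rightarrow> real" where
  "H m s x =
    (\<Prod>j=0..s. 1 + x ^ (2*m - 2*j - 1)) / ((1 + x) ^ s * (1 - x) ^ (2*s)) *
    (\<Sum>k=0..s. (-1) ^ (s - k) / (1 + x ^ (2*m - 2*k - 1)) * binomZ (2*int m - 1) (int k) *
      (\<Sum>i=0..s-k.
         binomZ (int m - int s + int i - 1) (int i) *
         (binomZ (int m - int k - int i - 1) (int s - int k - int i)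
             * x powi (2*int s - 2*int k - 2*int i)
          + binomZ (int m - int k - int i - 2) (int s - int k - int i - 1)
             * x powi (2*int s - 2*int k - 2*int i - 1))))"

end

(* Write q = t^2 and M = 2m - 1.  Since T_{M,n+1} = ((1 - q^(n+1))/(1 - q))^M - t^M T_{M,n} and
   T_{M,0} = 0, it suffices that the right-hand side obeys the same recursion in n and vanishes
   at n = 0.  Its first term solves the homogeneous recursion.  Its second term is F(q^n), where
   F(u) = sum_k c_k (1 - t u) u^k ((1 - u)(1 - q u))^(m-1-k) and c_k is H_{m,k}(t) up to an explicit
   factor.  The inner sums of H_{m,s} are the Taylor coefficients a_N(K) of
   (1 + t x) / ((1 - x)(1 - q x))^N with N = m - s, and these satisfy
   sum_K a_{L+1-K}(K) u^K ((1 - u)(1 - q u))^(L-K) = 1 + t u + ... + (t u)^(2L).  This turns F into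
   sum_j b_j (u^j - t^(M-2j) u^(M-j)) with binomial b_j, and F(q u) + t^M F(u) = ((1 - q u)/(1 - q))^M
   becomes the binomial theorem.

   (1 - t)^(2s) H_{m,s} is visibly an integer polynomial.  If (t - 1)^(2s) did not divide it for
   some s, multiply the identity by the largest resulting pole order at t = 1 and let t tend to 1:
   the left side tends to 0, and the right side gives, for every even n, a polynomial relation in n
   forcing the leading coefficients at the pole of all H_{m,k} to vanish, a contradiction. *)

theory Submission
  imports Defs "HOL-Computational_Algebra.Formal_Power_Series"
begin

unbundle fps_syntax

section \<open>Taylor coefficients of (1 + t x) / ((1 - x) (1 - t^2 x))^N\<close>

lemma inverse_one_minus_const_fps_X_power_nth:
  fixes c :: "'a :: field_char_0"
  shows "inverse ((1 - fps_const c * fps_X) ^ N) $ k = of_nat ((N + k - 1) choose k) * c ^ k"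
proof (cases "N = 0")
  case True
  then show ?thesis by (cases k) simp_all
qed (simp add: one_minus_const_fps_X_neg_power')

definition gfun :: "'a :: field_char_0 \<Rightarrow> nat \<Rightarrow> 'a fps" where
  "gfun t N = inverse ((1 - fps_X) ^ N)
     * ((1 + fps_const t * fps_X) * inverse ((1 - fps_const (t^2) * fps_X) ^ N))"

definition gcoeff :: "'a :: field_char_0 \<Rightarrow> nat \<Rightarrow> nat \<Rightarrow> 'a" where
  "gcoeff t N K = gfun t N $ K"

lemma gcoeff_explicit:
  "gcoeff t N K = (\<Sum>i=0..K. of_nat ((N + i - 1) choose i) *
     (of_nat ((N + (K - i) - 1) choose (K - i)) * (t^2) ^ (K - i)
      + (if i < K then t * (of_nat ((N + (K - i - 1) - 1) choose (K - i - 1)) * (t^2) ^ (K - i - 1))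
         else 0)))"
proof -
  have first: "inverse ((1 - fps_X) ^ N :: 'a fps) $ i = of_nat ((N + i - 1) choose i)" for i
    using inverse_one_minus_const_fps_X_power_nth[of "1 :: 'a" N i] by simp
  have second: "((1 + fps_const t * fps_X) * inverse ((1 - fps_const (t^2) * fps_X) ^ N)) $ j
      = of_nat ((N + j - 1) choose j) * (t^2) ^ j
        + (if 0 < j then t * (of_nat ((N + (j - 1) - 1) choose (j - 1)) * (t^2) ^ (j - 1)) else 0)"
    for j
    by (simp add: distrib_right mult.assoc inverse_one_minus_const_fps_X_power_nth)
  show ?thesis
    unfolding gcoeff_def gfun_def fps_mult_nth[of "inverse _"] first second
    by (intro sum.cong) auto
qed

lemma gcoeff_0: "gcoeff t 0 K = (if K = 0 then 1 else if K = 1 then t else 0)"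
  by (simp add: gcoeff_def gfun_def)

lemma gfun_Suc:
  "gfun t N = gfun t (Suc N) * ((1 - fps_X) * (1 - fps_const (t^2) * fps_X))"
proof -
  define A :: "'a fps" where "A = 1 - fps_X"
  define B :: "'a fps" where "B = 1 - fps_const (t^2) * fps_X"
  have iA: "inverse A * A = 1" and iB: "inverse B * B = 1"
    by (simp_all add: A_def B_def inverse_mult_eq_1)
  have "gfun t (Suc N) * (A * B) = gfun t N * ((inverse A * A) * (inverse B * B))"
    unfolding gfun_def A_def[symmetric] B_def[symmetric] fps_inverse_power
    unfolding power_Suc by (simp only: mult_ac)
  then have "gfun t (Suc N) * (A * B) = gfun t N" unfolding iA iB by simp
  then show ?thesis by (simp add: A_def B_def)
qed

lemma gcoeff_Suc:
  "gcoeff t (Suc N) K = gcoeff t N K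
     + (1 + t^2) * (if K = 0 then 0 else gcoeff t (Suc N) (K - 1))
     - t^2 * (if K < 2 then 0 else gcoeff t (Suc N) (K - 2))"
proof -
  define G where "G = gfun t (Suc N)"
  have "(1 - fps_X) * (1 - fps_const (t^2) * fps_X)
      = 1 - fps_const (1 + t^2) * fps_X + fps_const (t^2) * fps_X^2"
    by (simp add: algebra_simps power2_eq_square flip: fps_const_add)
  then have "gfun t N = G * (1 - fps_const (1 + t^2) * fps_X + fps_const (t^2) * fps_X^2)"
    unfolding G_def gfun_Suc[of t N] by simp
  also have "\<dots> = G - fps_const (1 + t^2) * (fps_X * G) + fps_const (t^2) * (fps_X^2 * G)"
    by (simp add: algebra_simps)
  finally have "gcoeff t N K = G $ K - (1 + t^2) * (if K = 0 then 0 else G $ (K - 1))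
      + t^2 * (if K < 2 then 0 else G $ (K - 2))"
    by (simp add: gcoeff_def fps_X_power_mult_nth)
  then show ?thesis by (simp add: G_def gcoeff_def)
qed

definition block_term :: "'a :: field_char_0 \<Rightarrow> 'a \<Rightarrow> nat \<Rightarrow> nat \<Rightarrow> 'a" where
  "block_term t u L K = gcoeff t (L + 1 - K) K * u^K * ((1 - u) * (1 - t^2 * u)) ^ (L - K)"

lemma block_term_Suc_Suc:
  assumes "K \<le> L + 2"
  shows "block_term t u (L + 2) K
    = (if K \<le> L + 1 then (1 - u) * (1 - t^2 * u) * block_term t u (L + 1) K else 0)
      + (1 + t^2) * u * (if K = 0 then 0 else block_term t u (L + 1) (K - 1))
      - t^2 * u^2 * (if K < 2 then 0 else block_term t u L (K - 2))"
proof -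
  define p where "p = (1 - u) * (1 - t^2 * u)"
  define w where "w = u^K * p ^ (L + 2 - K)"
  have rec: "gcoeff t (L + 3 - K) K = (if K \<le> L + 1 then gcoeff t (L + 2 - K) K else 0)
      + (1 + t^2) * (if K = 0 then 0 else gcoeff t (L + 3 - K) (K - 1))
      - t^2 * (if K < 2 then 0 else gcoeff t (L + 3 - K) (K - 2))"
  proof -
    have "L + 3 - K = Suc (L + 2 - K)" using assms by simp
    then show ?thesis using gcoeff_Suc[of t "L + 2 - K" K] by (auto simp: gcoeff_0)
  qed
  have T2: "block_term t u (L + 2) K = gcoeff t (L + 3 - K) K * w"
    by (simp add: block_term_def p_def w_def eval_nat_numeral)
  have T1: "(if K \<le> L + 1 then p * block_term t u (L + 1) K else 0)
      = (if K \<le> L + 1 then gcoeff t (L + 2 - K) K else 0) * w"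
    by (simp add: block_term_def p_def w_def Suc_diff_le)
  have T1': "u * (if K = 0 then 0 else block_term t u (L + 1) (K - 1))
      = (if K = 0 then 0 else gcoeff t (L + 3 - K) (K - 1)) * w"
    using assms by (cases K) (simp_all add: block_term_def p_def w_def Suc_diff_le)
  have T0: "u^2 * (if K < 2 then 0 else block_term t u L (K - 2))
      = (if K < 2 then 0 else gcoeff t (L + 3 - K) (K - 2)) * w"
  proof (cases "K < 2")
    case False
    then have "K = Suc (Suc (K - 2))" by simp
    then obtain j where "K = Suc (Suc j)" by blast
    with assms show ?thesis by (simp add: block_term_def p_def w_def eval_nat_numeral)
  qed simp
  have "block_term t u (L + 2) K = (if K \<le> L + 1 then gcoeff t (L + 2 - K) K else 0) * w
      + (1 + t^2) * ((if K = 0 then 0 else gcoeff t (L + 3 - K) (K - 1)) * w)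
      - t^2 * ((if K < 2 then 0 else gcoeff t (L + 3 - K) (K - 2)) * w)"
    unfolding T2 by (subst rec) (simp add: algebra_simps)
  then show ?thesis
    unfolding p_def[symmetric] T1[symmetric] T1'[symmetric] T0[symmetric] by (simp add: algebra_simps)
qed

lemma sum_block_term_Suc_Suc:
  "(\<Sum>K\<le>L+2. block_term t u (L + 2) K)
    = (1 + (t*u)^2) * (\<Sum>K\<le>L+1. block_term t u (L + 1) K) - (t*u)^2 * (\<Sum>K\<le>L. block_term t u L K)"
proof -
  define T where "T = block_term t u"
  define p where "p = (1 - u) * (1 - t^2 * u)"
  have "(\<Sum>K\<le>L+2. T (L + 2) K) = (\<Sum>K\<le>L+2. (if K \<le> L + 1 then p * T (L + 1) K else 0))
      + (1 + t^2) * u * (\<Sum>K\<le>L+2. if K = 0 then 0 else T (L + 1) (K - 1))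
      - t^2 * u^2 * (\<Sum>K\<le>L+2. if K < 2 then 0 else T L (K - 2))"
    unfolding sum_distrib_left sum_subtractf[symmetric] sum.distrib[symmetric] T_def p_def
    by (rule sum.cong[OF refl], rule block_term_Suc_Suc) simp
  also have "(\<Sum>K\<le>L+2. if K \<le> L + 1 then p * T (L + 1) K else 0) = p * (\<Sum>K\<le>L+1. T (L + 1) K)"
    by (simp add: sum_distrib_left distrib_left)
  also have "(\<Sum>K\<le>L+2. if K = 0 then 0 else T (L + 1) (K - 1)) = (\<Sum>K\<le>L+1. T (L + 1) K)"
    using sum.atMost_Suc_shift[of "\<lambda>K. if K = 0 then 0 else T (L + 1) (K - 1)" "L + 1"] by simp
  also have "(\<Sum>K\<le>L+2. if K < 2 then 0 else T L (K - 2)) = (\<Sum>K\<le>L. T L K)"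
    by (simp only: sum.atMost_Suc_shift add_2_eq_Suc') simp
  finally show ?thesis unfolding T_def by (simp add: p_def algebra_simps power2_eq_square)
qed

lemma sum_block_term: "(\<Sum>K\<le>L. block_term t u L K) = (\<Sum>i\<le>2*L. (t*u)^i)"
proof -
  have "(\<Sum>K\<le>L. block_term t u L K) = (\<Sum>i\<le>2*L. (t*u)^i)
      \<and> (\<Sum>K\<le>Suc L. block_term t u (Suc L) K) = (\<Sum>i\<le>2 * Suc L. (t*u)^i)"
  proof (induction L)
    case 0
    show ?case
      by (simp add: block_term_def gcoeff_explicit numeral_2_eq_2 algebra_simps power2_eq_square)
  next
    case (Suc L)
    then show ?case
      using sum_block_term_Suc_Suc[of t u L] by (simp add: eval_nat_numeral algebra_simps power2_eq_square)
  qed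
  then show ?thesis ..
qed

section \<open>The identity\<close>

lemma one_plus_odd_power_neq_0:
  fixes t :: "'a :: linordered_idom"
  assumes "odd n" "t \<noteq> -1"
  shows "1 + t ^ n \<noteq> 0"
proof
  assume "1 + t ^ n = 0"
  then have neg: "(-t) ^ n = 1" using assms(1) by (simp add: power_minus_odd)
  then have "0 < -t" using assms(1) zero_less_power_eq[of "-t" n] by auto
  then have "-t = 1"
    using neg power_eq_imp_eq_base[of "-t" n 1] odd_pos[OF assms(1)] by simp
  with assms(2) show False by simp
qed

lemma binomZ_of_nat: "binomZ (int a) (int b) = real (a choose b)"
  by (simp add: binomZ_def binomial_gbinomial)

lemma H_inner_sum_eq_gcoeff:
  assumes "k \<le> s" "s < m"
  shows "(\<Sum>i=0..s-k. binomZ (int m - int s + int i - 1) (int i) *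
         (binomZ (int m - int k - int i - 1) (int s - int k - int i)
             * t powi (2*int s - 2*int k - 2*int i)
          + binomZ (int m - int k - int i - 2) (int s - int k - int i - 1)
             * t powi (2*int s - 2*int k - 2*int i - 1)))
    = gcoeff t (m - s) (s - k)"
  unfolding gcoeff_explicit
proof (intro sum.cong refl)
  fix i assume "i \<in> {0..s - k}"
  then have i: "i \<le> s - k" by simp
  have e1: "int m - int s + int i - 1 = int (m - s + i - 1)"
    and e2: "int m - int k - int i - 1 = int (m - s + (s - k - i) - 1)"
    and e3: "int s - int k - int i = int (s - k - i)"
    and e4: "2*int s - 2*int k - 2*int i = int (2 * (s - k - i))"
    using assms i by auto
  have "binomZ (int m - int k - int i - 2) (int s - int k - int i - 1)
           * t powi (2*int s - 2*int k - 2*int i - 1)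
      = (if i < s - k then t * (real ((m - s + (s - k - i - 1) - 1) choose (s - k - i - 1))
              * (t^2) ^ (s - k - i - 1)) else 0)"
  proof (cases "i < s - k")
    case True
    have f1: "int m - int k - int i - 2 = int (m - s + (s - k - i - 1) - 1)"
      and f2: "int s - int k - int i - 1 = int (s - k - i - 1)"
      and f3: "2*int s - 2*int k - 2*int i - 1 = int (Suc (2 * (s - k - i - 1)))"
      using assms True by auto
    show ?thesis using True unfolding f1 f2 f3 binomZ_of_nat power_int_of_nat
      by (simp add: power_mult)
  qed (use i in \<open>simp add: binomZ_def\<close>)
  then show "binomZ (int m - int s + int i - 1) (int i) *
         (binomZ (int m - int k - int i - 1) (int s - int k - int i)
             * t powi (2*int s - 2*int k - 2*int i)
          + binomZ (int m - int k - int i - 2) (int s - int k - int i - 1)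
             * t powi (2*int s - 2*int k - 2*int i - 1))
      = real ((m - s + i - 1) choose i) *
          (real ((m - s + (s - k - i) - 1) choose (s - k - i)) * (t^2) ^ (s - k - i)
           + (if i < s - k then t * (real ((m - s + (s - k - i - 1) - 1) choose (s - k - i - 1))
                * (t^2) ^ (s - k - i - 1)) else 0))"
    unfolding e1 e2 e3 e4 binomZ_of_nat power_int_of_nat by (simp add: power_mult)
qed

lemma H_eq_gcoeff:
  assumes "s < m"
  shows "H m s t = (\<Prod>j=0..s. 1 + t ^ (2*m - 2*j - 1)) / ((1 + t) ^ s * (1 - t) ^ (2*s)) *
    (\<Sum>k=0..s. (-1) ^ (s - k) / (1 + t ^ (2*m - 2*k - 1)) * real ((2*m - 1) choose k)
       * gcoeff t (m - s) (s - k))"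
proof -
  have "binomZ (2 * int m - 1) (int k) = real ((2*m - 1) choose k)" for k
    using binomZ_of_nat[of "2*m - 1" k] assms by (simp add: of_nat_diff)
  then show ?thesis
    unfolding H_def using assms
    by (intro arg_cong2[where f = "(*)"] refl sum.cong) (simp_all add: H_inner_sum_eq_gcoeff)
qed

definition pair_coeff :: "nat \<Rightarrow> real \<Rightarrow> nat \<Rightarrow> real" where
  "pair_coeff m t j = (-1) ^ j * real ((2*m - 1) choose j)
     / ((1 + t ^ (2*m - 1 - 2*j)) * (1 - t^2) ^ (2*m - 1))"

definition basis_poly :: "nat \<Rightarrow> real \<Rightarrow> nat \<Rightarrow> real \<Rightarrow> real" where
  "basis_poly m t k u = (1 - t*u) * u^k * ((1 - u) * (1 - t^2 * u)) ^ (m - 1 - k)"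

definition basis_coeff :: "nat \<Rightarrow> real \<Rightarrow> nat \<Rightarrow> real" where
  "basis_coeff m t k = (\<Sum>j\<le>k. pair_coeff m t j * gcoeff t (m - k) (k - j))"

lemma sum_gcoeff_basis_poly:
  assumes "j < m"
  shows "(\<Sum>k=j..<m. gcoeff t (m - k) (k - j) * basis_poly m t k u)
    = u^j - t ^ (2*m - 1 - 2*j) * u ^ (2*m - 1 - j)"
proof -
  define L where "L = m - 1 - j"
  have "(\<Sum>k=j..<m. gcoeff t (m - k) (k - j) * basis_poly m t k u)
      = (\<Sum>K\<le>L. gcoeff t (m - (j + K)) K * basis_poly m t (j + K) u)"
    using assms by (simp add: sum.atLeastLessThan_shift_0 atLeast0LessThan L_def lessThan_Suc_atMost
        flip: Suc_diff_Suc)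
  also have "\<dots> = (1 - t*u) * u^j * (\<Sum>K\<le>L. block_term t u L K)"
    unfolding sum_distrib_left
    by (intro sum.cong refl)
      (use assms in \<open>simp add: basis_poly_def block_term_def L_def power_add algebra_simps\<close>)
  also have "\<dots> = u^j * (1 - (t*u) ^ Suc (2*L))"
    unfolding sum_block_term by (simp add: sum_gp_basic)
  also have "\<dots> = u^j - t ^ (2*m - 1 - 2*j) * u ^ (2*m - 1 - j)"
  proof -
    have "2*m - 1 - 2*j = Suc (2*L)" "2*m - 1 - j = j + Suc (2*L)" using assms by (auto simp: L_def)
    then show ?thesis by (simp add: power_mult_distrib power_add algebra_simps)
  qed
  finally show ?thesis .
qed

lemma sum_basis_coeff_basis_poly:
  "(\<Sum>k<m. basis_coeff m t k * basis_poly m t k u)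
    = (\<Sum>j<m. pair_coeff m t j * (u^j - t ^ (2*m - 1 - 2*j) * u ^ (2*m - 1 - j)))"
proof -
  have "(\<Sum>k<m. basis_coeff m t k * basis_poly m t k u)
      = (\<Sum>k<m. \<Sum>j\<in>{j \<in> {..<m}. j \<le> k}. pair_coeff m t j * gcoeff t (m - k) (k - j) * basis_poly m t k u)"
    unfolding basis_coeff_def sum_distrib_right
    by (intro sum.cong refl) (auto intro: sum.mono_neutral_cong_left)
  also have "\<dots> = (\<Sum>j<m. \<Sum>k\<in>{k \<in> {..<m}. j \<le> k}. pair_coeff m t j * gcoeff t (m - k) (k - j) * basis_poly m t k u)"
    by (rule sum.swap_restrict) auto
  also have "\<dots> = (\<Sum>j<m. pair_coeff m t j * (u^j - t ^ (2*m - 1 - 2*j) * u ^ (2*m - 1 - j)))"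
  proof (intro sum.cong refl)
    fix j assume "j \<in> {..<m}"
    moreover have "{k \<in> {..<m}. j \<le> k} = {j..<m}" by auto
    ultimately show "(\<Sum>k\<in>{k \<in> {..<m}. j \<le> k}. pair_coeff m t j * gcoeff t (m - k) (k - j) * basis_poly m t k u)
        = pair_coeff m t j * (u^j - t ^ (2*m - 1 - 2*j) * u ^ (2*m - 1 - j))"
      by (simp add: sum_gcoeff_basis_poly mult.assoc flip: sum_distrib_left)
  qed
  finally show ?thesis .
qed

lemma sum_lessThan_double:
  fixes f :: "nat \<Rightarrow> 'a :: comm_monoid_add"
  shows "(\<Sum>k<2*m. f k) = (\<Sum>k<m. f k + f (2*m - 1 - k))"
proof -
  have "(\<Sum>k<2*m. f k) = (\<Sum>k<m. f k) + (\<Sum>k=m..<2*m. f k)"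
    by (simp add: sum.atLeastLessThan_concat flip: atLeast0LessThan)
  also have "(\<Sum>k=m..<2*m. f k) = (\<Sum>k<m. f (2*m - 1 - k))"
    by (rule sum.reindex_bij_witness[where i = "\<lambda>k. 2*m - 1 - k" and j = "\<lambda>k. 2*m - 1 - k"]) auto
  finally show ?thesis by (simp add: sum.distrib)
qed

lemma alternating_binomial_pairs:
  fixes w :: "'a :: comm_ring_1"
  assumes "m \<ge> 1"
  shows "(\<Sum>j<m. (-1) ^ j * of_nat ((2*m - 1) choose j) * (w^j - w ^ (2*m - 1 - j))) = (1 - w) ^ (2*m - 1)"
proof -
  define f where "f j = of_nat ((2*m - 1) choose j) * (-w) ^ j" for j
  have "(1 - w) ^ (2*m - 1) = (\<Sum>j<2*m. f j)"
    using binomial_ring[of "-w" 1 "2*m - 1"] assms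
    by (simp add: f_def lessThan_Suc_atMost[symmetric] algebra_simps)
  also have "\<dots> = (\<Sum>j<m. f j + f (2*m - 1 - j))" by (rule sum_lessThan_double)
  also have "\<dots> = (\<Sum>j<m. (-1) ^ j * of_nat ((2*m - 1) choose j) * (w^j - w ^ (2*m - 1 - j)))"
  proof (intro sum.cong refl)
    fix j assume "j \<in> {..<m}"
    then have binom: "(2*m - 1) choose (2*m - 1 - j) = (2*m - 1) choose j"
      and "2*m - 1 - j = Suc (2 * (m - 1 - j)) + j"
      using binomial_symmetric[of j "2*m - 1"] by auto
    then have sign: "(-1::'a) ^ (2*m - 1 - j) = - ((-1) ^ j)" by (simp add: power_add)
    show "f j + f (2*m - 1 - j) = (-1) ^ j * of_nat ((2*m - 1) choose j) * (w^j - w ^ (2*m - 1 - j))"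
      unfolding f_def binom power_minus[of w] sign by (simp add: algebra_simps)
  qed
  finally show ?thesis by simp
qed

lemma basis_expansion_functional_eq:
  assumes "m \<ge> 1" "t \<noteq> 1" "t \<noteq> -1"
  shows "(\<Sum>k<m. basis_coeff m t k * basis_poly m t k (t^2 * u))
      + t ^ (2*m - 1) * (\<Sum>k<m. basis_coeff m t k * basis_poly m t k u)
    = ((1 - t^2 * u) / (1 - t^2)) ^ (2*m - 1)"
proof -
  define w where "w = t^2 * u"
  have pair: "pair_coeff m t j * ((w^j - t ^ (2*m - 1 - 2*j) * w ^ (2*m - 1 - j))
        + t ^ (2*m - 1) * (u^j - t ^ (2*m - 1 - 2*j) * u ^ (2*m - 1 - j)))
      = (-1) ^ j * real ((2*m - 1) choose j) * (w^j - w ^ (2*m - 1 - j)) / (1 - t^2) ^ (2*m - 1)"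
    if "j < m" for j
  proof -
    define a where "a = t ^ (2*m - 1 - 2*j)"
    have "1 + a \<noteq> 0"
      unfolding a_def using that assms by (intro one_plus_odd_power_neq_0) auto
    have "t ^ (2*m - 1) = a * (t^2) ^ j" and "(t^2) ^ (2*m - 1 - j) = a * a * (t^2) ^ j"
      using that unfolding a_def by (simp_all flip: power_add power_mult) (simp_all add: algebra_simps)
    then have "(w^j - a * w ^ (2*m - 1 - j)) + t ^ (2*m - 1) * (u^j - a * u ^ (2*m - 1 - j))
        = (1 + a) * (w^j - w ^ (2*m - 1 - j))"
      by (simp add: w_def power_mult_distrib algebra_simps)
    with \<open>1 + a \<noteq> 0\<close> show ?thesis by (simp add: pair_coeff_def a_def)
  qed
  have "(\<Sum>k<m. basis_coeff m t k * basis_poly m t k w)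
      + t ^ (2*m - 1) * (\<Sum>k<m. basis_coeff m t k * basis_poly m t k u)
    = (\<Sum>j<m. (-1) ^ j * real ((2*m - 1) choose j) * (w^j - w ^ (2*m - 1 - j))) / (1 - t^2) ^ (2*m - 1)"
    unfolding sum_basis_coeff_basis_poly sum_distrib_left sum.distrib[symmetric] sum_divide_distrib
    by (intro sum.cong refl) (use pair in \<open>simp add: algebra_simps\<close>)
  also have "\<dots> = ((1 - w) / (1 - t^2)) ^ (2*m - 1)"
    unfolding alternating_binomial_pairs[OF assms(1)] power_divide ..
  finally show ?thesis by (simp add: w_def)
qed

lemma prod_one_plus_odd_powers_neq_0:
  fixes t :: "'a :: linordered_idom"
  assumes "k < m" "t \<noteq> -1"
  shows "(\<Prod>i=0..k. 1 + t ^ (2*m - 2*i - 1)) \<noteq> 0"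
proof -
  have "1 + t ^ (2*m - 2*i - 1) \<noteq> 0" if "i \<le> k" for i
    using that assms by (intro one_plus_odd_power_neq_0) auto
  then show ?thesis by (simp add: prod_zero_iff)
qed

lemma power_one_minus_square_split:
  fixes t :: real
  assumes "k < m"
  shows "(1 - t^2) ^ (2*m - 1)
    = (1 + t) ^ k * (1 - t) ^ (2*k) * ((1 - t^2) ^ (2*m - 2*k - 2) * (1 + t) ^ (k + 1) * (1 - t))"
proof -
  have "(1 + t) ^ k * (1 - t) ^ (2*k) * ((1 - t^2) ^ (2*m - 2*k - 2) * (1 + t) ^ (k + 1) * (1 - t))
      = ((1 + t) ^ k * (1 + t) ^ (k + 1)) * ((1 - t) ^ (2*k) * (1 - t)) * (1 - t^2) ^ (2*m - 2*k - 2)"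
    by (simp only: mult_ac)
  also have "\<dots> = ((1 + t) * (1 - t)) ^ (2*k + 1) * (1 - t^2) ^ (2*m - 2*k - 2)"
    by (simp add: power_mult_distrib mult_2 flip: power_add power_Suc2)
  also have "\<dots> = (1 - t^2) ^ (2*k + 1 + (2*m - 2*k - 2))"
    by (simp add: power_add power2_eq_square algebra_simps)
  also have "2*k + 1 + (2*m - 2*k - 2) = 2*m - 1" using assms by simp
  finally show ?thesis ..
qed

lemma basis_coeff_eq_H:
  assumes "k < m" "t \<noteq> 1" "t \<noteq> -1"
  shows "basis_coeff m t k = (-1) ^ k * H m k t
    / ((1 - t^2) ^ (2*m - 2*k - 2) * (1 + t) ^ (k + 1) * (\<Prod>i=0..k. 1 + t ^ (2*m - 2*i - 1)) * (1 - t))"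
proof -
  define P where "P = (\<Prod>i=0..k. 1 + t ^ (2*m - 2*i - 1))"
  define S where "S = (\<Sum>j=0..k. (-1) ^ (k - j) / (1 + t ^ (2*m - 2*j - 1))
    * real ((2*m - 1) choose j) * gcoeff t (m - k) (k - j))"
  have "P \<noteq> 0" unfolding P_def by (rule prod_one_plus_odd_powers_neq_0[OF assms(1,3)])
  have "(-1) ^ k * H m k t / ((1 - t^2) ^ (2*m - 2*k - 2) * (1 + t) ^ (k + 1) * P * (1 - t))
      = (-1) ^ k * S / (1 - t^2) ^ (2*m - 1)"
  proof -
    have "x * (P / E * S) / (A * B * P * c) = x * S / (E * (A * B * c))" for x E A B c :: real
      using \<open>P \<noteq> 0\<close> by (cases "E = 0"; cases "A * B * c = 0") (simp_all add: field_simps)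
    then show ?thesis unfolding H_eq_gcoeff[OF assms(1)] P_def[symmetric] S_def[symmetric]
      power_one_minus_square_split[OF assms(1)] .
  qed
  also have "\<dots> = basis_coeff m t k"
    unfolding S_def basis_coeff_def pair_coeff_def sum_distrib_left sum_divide_distrib atLeast0AtMost
  proof (intro sum.cong refl)
    fix j assume "j \<in> {..k}"
    then have "(-1::real) ^ k * (-1) ^ (k - j) = (-1) ^ j" and "2*m - 2*j - 1 = 2*m - 1 - 2*j"
      by (auto simp: power_diff_conv_inverse)
    then show "(-1) ^ k * ((-1) ^ (k - j) / (1 + t ^ (2*m - 2*j - 1)) * real ((2*m - 1) choose j)
          * gcoeff t (m - k) (k - j)) / (1 - t^2) ^ (2*m - 1)
        = (-1) ^ j * real ((2*m - 1) choose j) / ((1 + t ^ (2*m - 1 - 2*j)) * (1 - t^2) ^ (2*m - 1))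
          * gcoeff t (m - k) (k - j)"
      by (simp add: field_simps)
  qed
  finally show ?thesis by (simp add: P_def)
qed

lemma Tsq_0: "Tsq M 0 t = 0"
  by (simp add: Tsq_def)

lemma Tsq_Suc: "Tsq M (Suc n) t = ((1 - (t^2) ^ Suc n) / (1 - t^2)) ^ M - t^M * Tsq M n t"
proof -
  have "(\<Sum>k=1..n. (-1) ^ (Suc n - k) * ((1 - (t^2) ^ k) / (1 - t^2)) ^ M * t ^ (M * (Suc n - k)))
      = - (t^M * Tsq M n t)"
    unfolding Tsq_def sum_distrib_left sum_negf[symmetric]
  proof (intro sum.cong refl)
    fix k assume "k \<in> {1..n}"
    then have "Suc n - k = Suc (n - k)" by (simp add: Suc_diff_le)
    then show "(-1) ^ (Suc n - k) * ((1 - (t^2) ^ k) / (1 - t^2)) ^ M * t ^ (M * (Suc n - k))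
        = - (t^M * ((-1) ^ (n - k) * ((1 - (t^2) ^ k) / (1 - t^2)) ^ M * t ^ (M * (n - k))))"
      by (simp add: power_add)
  qed
  then show ?thesis by (simp add: Tsq_def sum.cl_ivl_Suc)
qed

lemma Tsq_eq_basis_expansion:
  assumes "m \<ge> 1" "t \<noteq> 1" "t \<noteq> -1"
  shows "Tsq (2*m - 1) n t = (-1) ^ (m + n) * H m (m - 1) t * t ^ (2*m*n - n)
        / ((1 + t) ^ m * (\<Prod>i=0..m-1. 1 + t ^ (2*m - 2*i - 1)))
      + (\<Sum>k<m. basis_coeff m t k * basis_poly m t k ((t^2) ^ n))"
proof (induction n)
  case 0
  obtain m' where m: "m = Suc m'" using assms(1) by (cases m) auto
  have "basis_poly m t k 1 = (if k = m' then 1 - t else 0)" if "k < m" for k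
    using that by (simp add: basis_poly_def m)
  then have "(\<Sum>k<m. basis_coeff m t k * basis_poly m t k ((t^2) ^ 0)) = basis_coeff m t m' * (1 - t)"
    by (simp add: m)
  also have "\<dots> = (-1) ^ m' * H m m' t / ((1 + t) ^ m * (\<Prod>i=0..m'. 1 + t ^ (2*m - 2*i - 1)))"
    using assms by (simp add: basis_coeff_eq_H m)
  finally show ?case by (simp add: Tsq_0 m)
next
  case (Suc n)
  have "2*m*Suc n - Suc n = (2*m*n - n) + (2*m - 1)" using assms(1) by (simp add: algebra_simps)
  then have "(-1) ^ (m + Suc n) * t ^ (2*m*Suc n - Suc n) = - (t ^ (2*m - 1) * ((-1) ^ (m + n) * t ^ (2*m*n - n)))"
    by (simp add: power_add)
  moreover have "(\<Sum>k<m. basis_coeff m t k * basis_poly m t k ((t^2) ^ Suc n))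
      = ((1 - (t^2) ^ Suc n) / (1 - t^2)) ^ (2*m - 1)
        - t ^ (2*m - 1) * (\<Sum>k<m. basis_coeff m t k * basis_poly m t k ((t^2) ^ n))"
    using basis_expansion_functional_eq[OF assms, of "(t^2) ^ n"] by simp
  ultimately show ?case using Suc by (simp add: Tsq_Suc algebra_simps)
qed

lemma basis_expansion_eq_second_term:
  assumes "m \<ge> 1" "t \<noteq> 1" "t \<noteq> -1"
  shows "(\<Sum>k<m. basis_coeff m t k * basis_poly m t k ((t^2) ^ n))
    = (1 - t ^ (2*n + 1)) / (1 - t) *
      (\<Sum>k=0..m-1. (-1) ^ k * H m k t * (1 - (t^2) ^ n) ^ (m - k - 1)
          * (1 - (t^2) ^ (n + 1)) ^ (m - k - 1) * (t^2) ^ (k * n)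
        / ((1 - t^2) ^ (2*m - 2*k - 2) * (1 + t) ^ (k + 1) * (\<Prod>i=0..k. 1 + t ^ (2*m - 2*i - 1))))"
proof -
  have "{0..m-1} = {..<m}" using assms(1) by auto
  moreover have "basis_coeff m t k * basis_poly m t k ((t^2) ^ n)
      = (1 - t ^ (2*n + 1)) / (1 - t) * ((-1) ^ k * H m k t * (1 - (t^2) ^ n) ^ (m - k - 1)
          * (1 - (t^2) ^ (n + 1)) ^ (m - k - 1) * (t^2) ^ (k * n)
        / ((1 - t^2) ^ (2*m - 2*k - 2) * (1 + t) ^ (k + 1) * (\<Prod>i=0..k. 1 + t ^ (2*m - 2*i - 1))))"
    if "k < m" for k
  proof -
    have "basis_poly m t k ((t^2) ^ n) = (1 - t ^ (2*n + 1)) * ((1 - (t^2) ^ n) ^ (m - k - 1)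
        * (1 - (t^2) ^ (n + 1)) ^ (m - k - 1) * (t^2) ^ (k * n))"
    proof -
      have "t * (t^2) ^ n = t ^ (2*n + 1)" "((t^2) ^ n) ^ k = (t^2) ^ (k * n)"
        "t^2 * (t^2) ^ n = (t^2) ^ (n + 1)" "m - 1 - k = m - k - 1"
        by (simp_all add: power_add flip: power_mult) (simp_all add: mult_ac)
      then show ?thesis unfolding basis_poly_def power_mult_distrib by (simp only: mult_ac)
    qed
    moreover have "a * h / (D * c) * (x * (y1 * y2 * y3)) = x / c * (a * h * y1 * y2 * y3 / D)"
      for a h D c x y1 y2 y3 :: real
      by (cases "c = 0"; cases "D = 0") (simp_all add: field_simps)
    ultimately show ?thesis unfolding basis_coeff_eq_H[OF that assms(2,3)] by simp
  qed
  ultimately show ?thesis by (simp add: sum_distrib_left)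
qed

lemma Tsq_identity:
  assumes "m \<ge> 1" "t \<noteq> 1" "t \<noteq> -1"
  shows "Tsq (2*m - 1) n t =
            (-1) ^ (m + n) * H m (m - 1) t * t ^ (2*m*n - n)
              / ((1 + t) ^ m * (\<Prod>i=0..m-1. 1 + t ^ (2*m - 2*i - 1)))
          + (1 - t ^ (2*n + 1)) / (1 - t) *
            (\<Sum>k=0..m-1. (-1) ^ k * H m k t * (1 - (t^2) ^ n) ^ (m - k - 1)
                 * (1 - (t^2) ^ (n + 1)) ^ (m - k - 1) * (t^2) ^ (k * n)
               / ((1 - t^2) ^ (2*m - 2*k - 2) * (1 + t) ^ (k + 1)
                  * (\<Prod>i=0..k. 1 + t ^ (2*m - 2*i - 1))))"
  unfolding Tsq_eq_basis_expansion[OF assms] basis_expansion_eq_second_term[OF assms] ..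

section \<open>Polynomiality of H\<close>

definition int_poly_fun :: "(real \<Rightarrow> real) \<Rightarrow> bool" where
  "int_poly_fun f \<longleftrightarrow> (\<exists>p :: int poly. \<forall>x. f x = poly (map_poly of_int p) x)"

lemma map_poly_of_int_add:
  "map_poly (of_int :: int \<Rightarrow> 'a :: ring_1) (p + q) = map_poly of_int p + map_poly of_int q"
  by (rule poly_eqI) (simp add: coeff_map_poly)

lemma map_poly_of_int_mult:
  "map_poly (of_int :: int \<Rightarrow> 'a :: comm_ring_1) (p * q) = map_poly of_int p * map_poly of_int q"
  by (rule poly_eqI) (simp add: coeff_map_poly coeff_mult)

lemma int_poly_fun_const: "int_poly_fun (\<lambda>x. of_int c)"
  unfolding int_poly_fun_def by (rule exI[of _ "[:c:]"]) (simp add: map_poly_pCons)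

lemma int_poly_fun_of_nat: "int_poly_fun (\<lambda>x. real c)"
  using int_poly_fun_const[of "int c"] by simp

lemma int_poly_fun_id: "int_poly_fun (\<lambda>x. x)"
  unfolding int_poly_fun_def by (rule exI[of _ "[:0, 1:]"]) (simp add: map_poly_pCons)

lemma int_poly_fun_add: "int_poly_fun f \<Longrightarrow> int_poly_fun g \<Longrightarrow> int_poly_fun (\<lambda>x. f x + g x)"
  unfolding int_poly_fun_def by (metis map_poly_of_int_add poly_add)

lemma int_poly_fun_mult: "int_poly_fun f \<Longrightarrow> int_poly_fun g \<Longrightarrow> int_poly_fun (\<lambda>x. f x * g x)"
  unfolding int_poly_fun_def by (metis map_poly_of_int_mult poly_mult)

lemma int_poly_fun_uminus: "int_poly_fun f \<Longrightarrow> int_poly_fun (\<lambda>x. - f x)"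
  using int_poly_fun_mult[OF int_poly_fun_const[of "-1"]] by simp

lemma int_poly_fun_power: "int_poly_fun f \<Longrightarrow> int_poly_fun (\<lambda>x. f x ^ n)"
  by (induction n) (use int_poly_fun_const[of 1] in \<open>simp_all add: int_poly_fun_mult\<close>)

lemma int_poly_fun_sum:
  "(\<And>i. i \<in> A \<Longrightarrow> int_poly_fun (f i)) \<Longrightarrow> int_poly_fun (\<lambda>x. \<Sum>i\<in>A. f i x)"
  by (induction A rule: infinite_finite_induct)
    (use int_poly_fun_const[of 0] in \<open>simp_all add: int_poly_fun_add\<close>)

lemma int_poly_fun_prod:
  "(\<And>i. i \<in> A \<Longrightarrow> int_poly_fun (f i)) \<Longrightarrow> int_poly_fun (\<lambda>x. \<Prod>i\<in>A. f i x)"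
  by (induction A rule: infinite_finite_induct)
    (use int_poly_fun_const[of 1] in \<open>simp_all add: int_poly_fun_mult\<close>)

lemma int_poly_fun_gcoeff: "int_poly_fun (\<lambda>t. gcoeff t N K)"
proof -
  have "int_poly_fun (\<lambda>t. if i < K then t * (real c * (t^2) ^ (K - i - 1)) else 0)" for i c
    using int_poly_fun_const[of 0]
    by (cases "i < K") (simp_all add: int_poly_fun_mult int_poly_fun_of_nat int_poly_fun_power int_poly_fun_id)
  then show ?thesis
    unfolding gcoeff_explicit
    by (intro int_poly_fun_sum int_poly_fun_mult int_poly_fun_add int_poly_fun_of_nat int_poly_fun_power
        int_poly_fun_id)
qed

lemma one_plus_odd_power_eq:
  fixes t :: "'a :: comm_ring_1"
  assumes "odd n"
  shows "1 + t ^ n = (1 + t) * (\<Sum>l<n. (-t) ^ l)"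
  using one_diff_power_eq[of "-t" n] assms by (simp add: power_minus_odd)

definition H_numerator :: "nat \<Rightarrow> nat \<Rightarrow> real \<Rightarrow> real" where
  "H_numerator m k t = (\<Sum>j=0..k. (-1) ^ (k - j) * real ((2*m - 1) choose j) * gcoeff t (m - k) (k - j)
     * (\<Prod>i\<in>{0..k} - {j}. \<Sum>l<2*m - 2*i - 1. (-t) ^ l))"

lemma int_poly_fun_H_numerator: "int_poly_fun (H_numerator m k)"
proof -
  have "int_poly_fun (\<lambda>t. H_numerator m k t)"
    unfolding H_numerator_def
    by (intro int_poly_fun_sum int_poly_fun_mult int_poly_fun_prod int_poly_fun_of_nat int_poly_fun_gcoeff
        int_poly_fun_power int_poly_fun_uminus int_poly_fun_id int_poly_fun_const[of 1, simplified])
  then show ?thesis by simp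
qed

lemma prod_one_plus_odd_powers_remove:
  fixes t :: "'a :: comm_ring_1"
  assumes "j \<le> k" "k < m"
  shows "(\<Prod>i=0..k. 1 + t ^ (2*m - 2*i - 1))
    = (1 + t ^ (2*m - 2*j - 1)) * ((1 + t) ^ k * (\<Prod>i\<in>{0..k} - {j}. \<Sum>l<2*m - 2*i - 1. (-t) ^ l))"
proof -
  have "(\<Prod>i\<in>{0..k} - {j}. 1 + t ^ (2*m - 2*i - 1))
      = (\<Prod>i\<in>{0..k} - {j}. (1 + t) * (\<Sum>l<2*m - 2*i - 1. (-t) ^ l))"
  proof (rule prod.cong[OF refl])
    fix i assume "i \<in> {0..k} - {j}"
    then have "odd (2*m - 2*i - 1)" using assms by auto
    then show "1 + t ^ (2*m - 2*i - 1) = (1 + t) * (\<Sum>l<2*m - 2*i - 1. (-t) ^ l)"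
      by (rule one_plus_odd_power_eq)
  qed
  then show ?thesis
    using assms by (simp add: prod.remove[of _ j] prod.distrib card_Diff_singleton)
qed

lemma H_mult_power_eq_numerator:
  assumes "k < m" "t \<noteq> 1" "t \<noteq> -1"
  shows "H m k t * (1 - t) ^ (2*k) = H_numerator m k t"
proof -
  define Q where "Q i = (\<Sum>l<2*m - 2*i - 1. (-t) ^ l)" for i
  have "(1 + t) ^ k \<noteq> 0" "(1 - t) ^ (2*k) \<noteq> 0" using assms by auto
  have "H m k t * (1 - t) ^ (2*k) = (\<Prod>i=0..k. 1 + t ^ (2*m - 2*i - 1)) / (1 + t) ^ k
      * (\<Sum>j=0..k. (-1) ^ (k - j) / (1 + t ^ (2*m - 2*j - 1)) * real ((2*m - 1) choose j)
          * gcoeff t (m - k) (k - j))"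
  proof -
    have "P / (A * c) * S * c = P / A * S" if "c \<noteq> 0" for P A c S :: real
      using that by (simp add: field_simps)
    from this[OF \<open>(1 - t) ^ (2*k) \<noteq> 0\<close>] show ?thesis unfolding H_eq_gcoeff[OF assms(1)] .
  qed
  also have "\<dots> = (\<Sum>j=0..k. (\<Prod>i=0..k. 1 + t ^ (2*m - 2*i - 1)) / (1 + t) ^ k
      * ((-1) ^ (k - j) / (1 + t ^ (2*m - 2*j - 1)) * real ((2*m - 1) choose j) * gcoeff t (m - k) (k - j)))"
    by (rule sum_distrib_left)
  also have "\<dots> = H_numerator m k t"
    unfolding H_numerator_def Q_def[symmetric]
  proof (intro sum.cong refl)
    fix j assume "j \<in> {0..k}"
    then have "j \<le> k" by simp
    then have "1 + t ^ (2*m - 2*j - 1) \<noteq> 0"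
      using assms by (intro one_plus_odd_power_neq_0) auto
    moreover have "e * (a * R) / a * (s / e * c * g) = s * c * g * R" if "e \<noteq> 0" "a \<noteq> 0"
      for e a R s c g :: real
      using that by (simp add: field_simps)
    ultimately show "(\<Prod>i=0..k. 1 + t ^ (2*m - 2*i - 1)) / (1 + t) ^ k
        * ((-1) ^ (k - j) / (1 + t ^ (2*m - 2*j - 1)) * real ((2*m - 1) choose j) * gcoeff t (m - k) (k - j))
      = (-1) ^ (k - j) * real ((2*m - 1) choose j) * gcoeff t (m - k) (k - j) * (\<Prod>i\<in>{0..k} - {j}. Q i)"
      unfolding prod_one_plus_odd_powers_remove[OF \<open>j \<le> k\<close> assms(1)] Q_def
      using \<open>(1 + t) ^ k \<noteq> 0\<close> by blast
  qed
  finally show ?thesis .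
qed

lemma coeffs_eq_0_if_infinite_roots:
  fixes \<beta> :: "nat \<Rightarrow> real"
  assumes "infinite A" and roots: "\<And>x. x \<in> A \<Longrightarrow> c + (2*x + 1) * (\<Sum>k<m. \<beta> k * (x * (x + 1)) ^ (m - 1 - k)) = 0"
    and "k < m"
  shows "\<beta> k = 0"
proof -
  define G :: "real poly" where "G = (\<Sum>k<m. monom (\<beta> k) (m - 1 - k))"
  define Q where "Q = [:c:] + [:1, 2:] * pcompose G [:0, 1, 1:]"
  have poly_Q: "poly Q x = c + (2*x + 1) * (\<Sum>k<m. \<beta> k * (x * (x + 1)) ^ (m - 1 - k))" for x
    by (simp add: Q_def G_def poly_pcompose poly_sum poly_monom algebra_simps)
  have "Q = 0"
  proof (rule ccontr)
    assume "Q \<noteq> 0"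
    then have "finite {x. poly Q x = 0}" by (rule poly_roots_finite)
    moreover have "A \<subseteq> {x. poly Q x = 0}" using roots by (auto simp: poly_Q)
    ultimately show False using \<open>infinite A\<close> finite_subset by blast
  qed
  then have "c = 0" using poly_Q[of "-1/2"] by simp
  with \<open>Q = 0\<close> have "pcompose G [:0, 1, 1:] = 0" by (simp add: Q_def del: mult_pCons_left)
  then have "G = 0" by (simp add: pcompose_eq_0)
  then have "coeff G (m - 1 - k) = 0" by simp
  moreover have "coeff G (m - 1 - k) = \<beta> k"
  proof -
    have "coeff G (m - 1 - k) = (\<Sum>k'<m. if k' = k then \<beta> k' else 0)"
      unfolding G_def coeff_sum coeff_monom using \<open>k < m\<close> by (intro sum.cong) auto
    then show ?thesis using \<open>k < m\<close> by simp
  qed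
  ultimately show ?thesis by simp
qed

lemma isCont_eq_if_eq_nearby:
  fixes f g :: "real \<Rightarrow> real"
  assumes "isCont f a" "isCont g a" "\<forall>\<^sub>F x in at a. f x = g x"
  shows "f a = g a"
proof -
  have "(g \<longlongrightarrow> f a) (at a)"
    using Lim_transform_eventually[OF assms(1)[unfolded isCont_def] assms(3)] .
  with assms(2) show ?thesis by (simp add: isCont_def LIM_unique)
qed

lemma Tsq_eq_sum_qint:
  assumes "t \<noteq> 1" "t \<noteq> -1"
  shows "Tsq M n t = (\<Sum>k=1..n. (-1) ^ (n - k) * (\<Sum>i<k. (t^2) ^ i) ^ M * t ^ (M * (n - k)))"
proof -
  have "1 - t^2 \<noteq> 0" using assms by (auto simp: power2_eq_1_iff)
  then show ?thesis unfolding Tsq_def by (simp add: one_diff_power_eq)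
qed

(* The right-hand side of the identity with H m replaced by an arbitrary family h and the
   quotients (1 - x^(2j)) / (1 - x^2) written as geometric sums, so that it is continuous at x = 1. *)
definition T_expansion :: "nat \<Rightarrow> nat \<Rightarrow> (nat \<Rightarrow> real \<Rightarrow> real) \<Rightarrow> real \<Rightarrow> real" where
  "T_expansion m n h x = (-1) ^ (m + n) * h (m - 1) x * x ^ (2*m*n - n)
       / ((1 + x) ^ m * (\<Prod>i=0..m-1. 1 + x ^ (2*m - 2*i - 1)))
     + (\<Sum>i\<le>2*n. x^i) * (\<Sum>k<m. (-1) ^ k * h k x
       * ((\<Sum>i<n. (x^2) ^ i) * (\<Sum>i\<le>n. (x^2) ^ i)) ^ (m - k - 1) * (x^2) ^ (k * n)
       / ((1 + x) ^ (k + 1) * (\<Prod>i=0..k. 1 + x ^ (2*m - 2*i - 1))))"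

lemma Tsq_eq_T_expansion:
  assumes "m \<ge> 1" "t \<noteq> 1" "t \<noteq> -1"
  shows "Tsq (2*m - 1) n t = T_expansion m n (H m) t"
proof -
  have "1 - t \<noteq> 0" "1 - t^2 \<noteq> 0" using assms by (auto simp: power2_eq_1_iff)
  have geom: "(1 - t ^ (2*n + 1)) / (1 - t) = (\<Sum>i\<le>2*n. t^i)"
    using sum_gp_basic[of t "2*n"] \<open>1 - t \<noteq> 0\<close> by (simp add: field_simps)
  have qint: "(1 - (t^2) ^ n) ^ (m - k - 1) * (1 - (t^2) ^ (n + 1)) ^ (m - k - 1) / (1 - t^2) ^ (2*m - 2*k - 2)
      = ((\<Sum>i<n. (t^2) ^ i) * (\<Sum>i\<le>n. (t^2) ^ i)) ^ (m - k - 1)" for k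
  proof -
    have "(c * A) ^ a * (c * B) ^ a / c ^ (a + a) = (A * B) ^ a" if "c \<noteq> 0" for c A B :: real and a
      using that by (simp add: power_mult_distrib power_add)
    moreover have "1 - (t^2) ^ (n + 1) = (1 - t^2) * (\<Sum>i\<le>n. (t^2) ^ i)"
      using one_diff_power_eq[of "t^2" "n + 1"] by (simp add: lessThan_Suc_atMost)
    moreover have "2*m - 2*k - 2 = (m - k - 1) + (m - k - 1)" by simp
    ultimately show ?thesis using \<open>1 - t^2 \<noteq> 0\<close> by (simp add: one_diff_power_eq[of "t^2" n])
  qed
  have "x * y1 * y2 * z / (d * e * f) = x * (y1 * y2 / d) * z / (e * f)" for x y1 y2 z d e f :: real
    by (simp add: divide_inverse mult_ac)
  moreover have "{0..m-1} = {..<m}" using assms(1) by auto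
  ultimately show ?thesis
    unfolding Tsq_identity[OF assms] T_expansion_def geom qint[symmetric] by simp (simp add: mult.assoc)
qed

lemma T_expansion_mult: "c * T_expansion m n h x = T_expansion m n (\<lambda>k y. c * h k y) x"
  by (simp add: T_expansion_def distrib_left sum_distrib_left mult_ac)

lemma T_expansion_cong:
  assumes "m \<ge> 1" "\<And>k. k < m \<Longrightarrow> h k x = h' k x"
  shows "T_expansion m n h x = T_expansion m n h' x"
  using assms by (simp add: T_expansion_def)

lemma isCont_T_expansion:
  assumes "m \<ge> 1" "\<And>k. k < m \<Longrightarrow> isCont (h k) 1"
  shows "isCont (T_expansion m n h) 1"
  unfolding T_expansion_def using assms
  by (intro continuous_intros) (auto simp: prod_zero_iff)

lemma T_expansion_at_1:
  assumes "m \<ge> 1"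
  shows "T_expansion m n h 1 = (-1) ^ (m + n) * h (m - 1) 1 / 4 ^ m
    + (2 * real n + 1) * (\<Sum>k<m. (-1) ^ k * h k 1 * (real n * (real n + 1)) ^ (m - k - 1) / 4 ^ (k + 1))"
proof -
  have "(2::real) ^ j * 2 ^ j = 4 ^ j" for j by (simp flip: power_mult_distrib)
  then show ?thesis using assms by (simp add: T_expansion_def power_add) (simp add: ac_simps)
qed

lemma T_expansion_regularized_at_1:
  assumes "m \<ge> 1" "P > 0"
    and cont: "\<And>k. k < m \<Longrightarrow> isCont (g k) 1"
    and g: "\<And>k x. k < m \<Longrightarrow> x \<noteq> 1 \<Longrightarrow> x \<noteq> -1 \<Longrightarrow> (1 - x) ^ P * H m k x = g k x"
  shows "T_expansion m n g 1 = 0"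
proof -
  define L where "L x = (1 - x) ^ P
    * (\<Sum>k=1..n. (-1) ^ (n - k) * (\<Sum>i<k. (x^2) ^ i) ^ (2*m - 1) * x ^ ((2*m - 1) * (n - k)))"
    for x :: real
  have "L x = T_expansion m n g x" if "x \<noteq> 1" "x \<noteq> -1" for x
  proof -
    have "L x = (1 - x) ^ P * T_expansion m n (H m) x"
      unfolding L_def Tsq_eq_sum_qint[OF that, symmetric] Tsq_eq_T_expansion[OF assms(1) that] ..
    also have "\<dots> = T_expansion m n (\<lambda>k y. (1 - x) ^ P * H m k y) x"
      by (rule T_expansion_mult)
    also have "\<dots> = T_expansion m n g x"
      using g that by (intro T_expansion_cong[OF assms(1)]) auto
    finally show ?thesis .
  qed
  then have "\<forall>\<^sub>F x in at 1. L x = T_expansion m n g x"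
    using eventually_conj[OF eventually_neq_at_within[of 1 1 UNIV] eventually_neq_at_within[of "-1" 1 UNIV]]
    by (auto elim: eventually_mono)
  then have "L 1 = T_expansion m n g 1"
    by (intro isCont_eq_if_eq_nearby isCont_T_expansion[OF assms(1) cont]) (simp_all add: L_def)
  moreover have "L 1 = 0" using \<open>P > 0\<close> by (simp add: L_def)
  ultimately show ?thesis by simp
qed

lemma H_pole_leading_coeffs_eq_0:
  assumes "m \<ge> 1" "P > 0"
    and cont: "\<And>k. k < m \<Longrightarrow> isCont (g k) 1"
    and g: "\<And>k x. k < m \<Longrightarrow> x \<noteq> 1 \<Longrightarrow> x \<noteq> -1 \<Longrightarrow> (1 - x) ^ P * H m k x = g k x"
    and "k < m"
  shows "g k 1 = 0"
proof -
  (* only even n are used, so that the sign (-1)^(m+n) is constant *)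
  define \<beta> where "\<beta> k = (-1) ^ k * g k 1 / 4 ^ (k + 1)" for k
  define c where "c = (-1) ^ m * g (m - 1) 1 / 4 ^ m"
  have "\<beta> k = 0"
  proof (rule coeffs_eq_0_if_infinite_roots)
    show "infinite (range (\<lambda>j. real (2 * j)))"
      by (rule range_inj_infinite) (auto simp: inj_on_def)
    fix x assume "x \<in> range (\<lambda>j. real (2 * j))"
    then obtain j where "x = real (2 * j)" by blast
    then show "c + (2*x + 1) * (\<Sum>k<m. \<beta> k * (x * (x + 1)) ^ (m - 1 - k)) = 0"
      using T_expansion_regularized_at_1[OF assms(1-4), of "2 * j"] T_expansion_at_1[OF assms(1)]
      by (simp add: c_def \<beta>_def power_add mult_ac)
  qed fact
  then show ?thesis by (simp add: \<beta>_def)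
qed

lemma poly_map_poly_of_int_mult:
  "poly (map_poly (of_int :: int \<Rightarrow> real) (p * q)) x
    = poly (map_poly of_int p) x * poly (map_poly of_int q) x"
  by (simp add: map_poly_of_int_mult)

lemma poly_map_poly_of_int_power:
  "poly (map_poly (of_int :: int \<Rightarrow> real) (p ^ n)) x = poly (map_poly of_int p) x ^ n"
  by (induction n) (simp_all add: poly_map_poly_of_int_mult)

lemma poly_map_poly_of_int_of_int:
  "poly (map_poly (of_int :: int \<Rightarrow> real) p) (of_int x) = of_int (poly p x)"
  by (induction p) (simp_all add: map_poly_pCons)

lemma H_mult_power_regularized:
  fixes p r :: "int poly"
  assumes "k < m" "x \<noteq> 1" "x \<noteq> -1"
    and num: "H_numerator m k x = poly (map_poly of_int p) x"
    and p: "p = [:-1, 1:] ^ d * r" and "2*k \<le> P + d"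
  shows "(1 - x) ^ P * H m k x = (-1) ^ d * (1 - x) ^ (P + d - 2*k) * poly (map_poly of_int r) x"
proof -
  have "(1 - x) ^ P * (1 - x) ^ d = (1 - x) ^ (P + d - 2*k) * (1 - x) ^ (2*k)"
    using \<open>2*k \<le> P + d\<close> by (simp flip: power_add)
  moreover have "(x - 1) ^ d = (-1) ^ d * (1 - x) ^ d"
    by (simp flip: power_mult_distrib)
  moreover have "(1 - x) ^ P * H m k x * (1 - x) ^ (2*k)
      = (1 - x) ^ P * ((x - 1) ^ d * poly (map_poly of_int r) x)"
    using H_mult_power_eq_numerator[OF assms(1-3)] num
    by (simp add: p poly_map_poly_of_int_mult poly_map_poly_of_int_power map_poly_pCons mult.assoc)
  ultimately have "(1 - x) ^ P * H m k x * (1 - x) ^ (2*k)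
      = (-1) ^ d * (1 - x) ^ (P + d - 2*k) * poly (map_poly of_int r) x * (1 - x) ^ (2*k)"
    by (simp only: mult_ac)
  then show ?thesis using assms(2) by simp
qed

lemma H_numerator_order:
  fixes p :: "nat \<Rightarrow> int poly"
  assumes "m \<ge> 1" and num: "\<And>k x. H_numerator m k x = poly (map_poly of_int (p k)) x"
    and "k < m" "p k \<noteq> 0"
  shows "2*k \<le> order 1 (p k)"
proof -
  define ord where "ord k = order 1 (p k)" for k
  define e where "e k = (if p k = 0 then 0 else 2*k - ord k)" for k
  define P where "P = Max (e ` {..<m})"
  have e_le: "e k \<le> P" if "k < m" for k
    unfolding P_def using that by (intro Max_ge) auto
  (* P is the largest pole order at 1 among the H m k; the functions g k below are the
     H m k multiplied by (1 - x)^P, and g ks 1 is a nonzero leading coefficient. *)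
  have "P = 0"
  proof (rule ccontr)
    assume "P \<noteq> 0"
    have "P \<in> e ` {..<m}" unfolding P_def using assms(3) by (intro Max_in) auto
    then obtain ks where ks: "ks < m" "e ks = P" by auto
    have "p ks \<noteq> 0" using ks \<open>P \<noteq> 0\<close> by (auto simp: e_def)
    obtain r where r: "\<And>k. p k \<noteq> 0 \<Longrightarrow> p k = [:-1, 1:] ^ ord k * r k \<and> \<not> [:-1, 1:] dvd r k"
      using order_decomp[of "p _" 1] unfolding ord_def by metis
    define g :: "nat \<Rightarrow> real \<Rightarrow> real" where "g k x = (if p k = 0 then 0
      else (-1) ^ ord k * (1 - x) ^ (P + ord k - 2*k) * poly (map_poly of_int (r k)) x)" for k x
    have "(1 - x) ^ P * H m k x = g k x" if "k < m" "x \<noteq> 1" "x \<noteq> -1" for k x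
    proof (cases "p k = 0")
      case True
      then show ?thesis using H_mult_power_eq_numerator[OF that] num[of k x] that by (simp add: g_def)
    next
      case False
      have "2*k \<le> P + ord k" using e_le[OF that(1)] False by (simp add: e_def)
      with False show ?thesis
        using H_mult_power_regularized[OF that num] r by (simp add: g_def)
    qed
    moreover have "isCont (g k) 1" for k
      unfolding g_def by (cases "p k = 0") (simp_all add: poly_map_poly_of_int_mult)
    ultimately have "g ks 1 = 0"
      using assms(1) \<open>P \<noteq> 0\<close> ks(1) by (intro H_pole_leading_coeffs_eq_0) auto
    moreover have "P + ord ks - 2*ks = 0" using ks(2) \<open>p ks \<noteq> 0\<close> \<open>P \<noteq> 0\<close> by (auto simp: e_def)
    moreover have "poly (r ks) 1 \<noteq> 0"
      using r[OF \<open>p ks \<noteq> 0\<close>] by (simp add: poly_eq_0_iff_dvd)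
    ultimately show False
      using poly_map_poly_of_int_of_int[of "r ks" 1] \<open>p ks \<noteq> 0\<close> by (simp add: g_def)
  qed
  then show ?thesis using e_le[OF assms(3)] assms(4) by (simp add: e_def ord_def)
qed

lemma H_eq_int_poly:
  assumes "m \<ge> 1" "s < m"
  shows "\<exists>p :: int poly. \<forall>x::real. x \<noteq> 1 \<and> x \<noteq> -1 \<longrightarrow> H m s x = poly (map_poly real_of_int p) x"
proof -
  have "\<forall>k. \<exists>p :: int poly. \<forall>x. H_numerator m k x = poly (map_poly of_int p) x"
    using int_poly_fun_H_numerator unfolding int_poly_fun_def by blast
  then obtain num where num: "\<And>k x. H_numerator m k x = poly (map_poly of_int (num k)) x"
    by metis
  have "[:-1, 1:] ^ (2*s) dvd num s"
  proof (cases "num s = 0")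
    case False
    then have "[:-1, 1:] ^ (2*s) dvd [:-1, 1:] ^ order 1 (num s)"
      using H_numerator_order[OF assms(1) num assms(2)] by (intro le_imp_power_dvd)
    also have "\<dots> dvd num s" using order_1[of 1 "num s"] by simp
    finally show ?thesis .
  qed simp
  then obtain r where r: "num s = [:-1, 1:] ^ (2*s) * r" by (elim dvdE)
  show ?thesis
  proof (intro exI allI impI)
    fix x :: real assume x: "x \<noteq> 1 \<and> x \<noteq> -1"
    have "H m s x * (1 - x) ^ (2*s) = (x - 1) ^ (2*s) * poly (map_poly of_int r) x"
      using H_mult_power_eq_numerator[OF assms(2)] x num[of s x]
      by (simp add: r poly_map_poly_of_int_mult poly_map_poly_of_int_power map_poly_pCons)
    also have "(x - 1) ^ (2*s) = (1 - x) ^ (2*s)"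
      by (simp add: power_mult power2_commute)
    finally show "H m s x = poly (map_poly real_of_int r) x" using x by simp
  qed
qed

theorem theorem1p4:
  fixes m n :: nat
  assumes "m \<ge> 1" and "n \<ge> 1"
  shows "(\<forall>s<m. \<exists>p :: int poly. \<forall>x::real. x \<noteq> 1 \<and> x \<noteq> -1 \<longrightarrow>
            H m s x = poly (map_poly real_of_int p) x)
     \<and> (\<forall>t::real. t \<noteq> 1 \<and> t \<noteq> -1 \<longrightarrow>
          Tsq (2*m - 1) n t =
            (-1) ^ (m + n) * H m (m - 1) t * t ^ (2*m*n - n)
              / ((1 + t) ^ m * (\<Prod>i=0..m-1. 1 + t ^ (2*m - 2*i - 1)))
          + (1 - t ^ (2*n + 1)) / (1 - t) *
            (\<Sum>k=0..m-1. (-1) ^ k * H m k t * (1 - (t^2) ^ n) ^ (m - k - 1)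
                 * (1 - (t^2) ^ (n + 1)) ^ (m - k - 1) * (t^2) ^ (k * n)
               / ((1 - t^2) ^ (2*m - 2*k - 2) * (1 + t) ^ (k + 1)
                  * (\<Prod>i=0..k. 1 + t ^ (2*m - 2*i - 1)))))"
  using H_eq_int_poly[OF assms(1)] Tsq_identity[OF assms(1)] by blast

end
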